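(* For every integer $s\geq 0$, as formal power series in $t$, $$\sum_{n=0}^{\infty} L_{n,s}\,\frac{t^n}{n!} \;=\; \frac{e^{-1+\sqrt{1-2t}}}{\sqrt{1-2t}}\cdot\frac{\bigl(1-\sqrt{1-2t}\bigr)^s}{s!}.$$
   Context: A linear chord diagram with $n$ chords is a partition of $[2n]=\{1,2,\dots,2n\}$ into $n$ blocks of size two, called chords (equivalently, a perfect matching of $[2n]$). For a chord $\{a,b\}$ with $a<b$, its length is $b-a$. A short chord is a chord of length one, i.e. a chord of the form $\{i,i+1\}$. For $n\ge 0$ and $0\le s\le n$, $L_{n,s}$ denotes the number of linear chord diagrams with $n$ chords having exactly $s$ short chords (so $L_{0,0}=1$), and $L_{n,s}=0$ for $s>n$. *)

theory Defs
  imports "HOL-Computational_Algebra.Formal_Power_Series" "HOL-Library.Disjoint_Sets"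
begin

definition chord_diagrams :: "nat \<Rightarrow> nat set set set" where
  "chord_diagrams n = {M. partition_on {1..2*n} M \<and> (\<forall>c\<in>M. card c = 2)}"

definition short_chords :: "nat set set \<Rightarrow> nat set set" where
  "short_chords M = {c \<in> M. \<exists>i. c = {i, Suc i}}"

definition L :: "nat \<Rightarrow> nat \<Rightarrow> nat" where
  "L n s = card {M \<in> chord_diagrams n. card (short_chords M) = s}"

definition sqrt_1m2t :: "real fps" where
  "sqrt_1m2t = fps_binomial (1/2) oo (- 2 * fps_X)"

end

(*
  Deleting the chord through the point 1 is a bijection between diagrams with n + 1 chords and
  pairs of a diagram with n chords and the partner a \<in> {2..2n+2} of 1.  Reinserting with a = 2
  creates one short chord; placing a inside one of the s short chords destroys that chord; the
  other 2n - s positions keep the number of short chords.  Hence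
    L(n+1, s) = L(n, s-1) + (s+1) L(n, s+1) + (2n - s) L(n, s),
  i.e. the exponential generating functions F_s satisfy
    (1 - 2t) F_s' = F_(s-1) + (s+1) F_(s+1) - s F_s,   F_s(0) = [s = 0],
  and this system determines the F_s coefficient by coefficient.  The claimed series satisfy it
  because S = sqrt(1 - 2t) has S' = -1/S and S^2 = 1 - 2t.
*)

theory Submission
  imports Defs
begin

definition perfect_matching :: "'a set \<Rightarrow> 'a set set \<Rightarrow> bool" where
  "perfect_matching A M \<longleftrightarrow> partition_on A M \<and> (\<forall>c\<in>M. card c = 2)"

lemma chord_diagrams_eq: "chord_diagrams n = {M. perfect_matching {1..2*n} M}"
  by (simp add: chord_diagrams_def perfect_matching_def)

lemma perfect_matching_inj_image:
  assumes "perfect_matching A M" "inj_on f A"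
  shows "perfect_matching (f ` A) ((`) f ` M)"
proof -
  have P: "partition_on A M" and C: "\<forall>c\<in>M. card c = 2"
    using assms(1) by (auto simp: perfect_matching_def)
  have "partition_on (f ` A) ((`) f ` M - {{}})" by (rule partition_on_inj_image[OF P assms(2)])
  moreover have "{} \<notin> (`) f ` M" using partition_onD3[OF P] by auto
  ultimately have "partition_on (f ` A) ((`) f ` M)" by simp
  moreover have "card (f ` c) = 2" if "c \<in> M" for c
  proof -
    have "inj_on f c" using P that assms(2) by (auto simp: partition_on_def intro: inj_on_subset)
    then show ?thesis using that C card_image by fastforce
  qed
  ultimately show ?thesis by (auto simp: perfect_matching_def)
qed

lemma perfect_matching_insert:
  assumes "perfect_matching A M" "x \<notin> A" "y \<notin> A" "x \<noteq> y"
  shows "perfect_matching (insert x (insert y A)) (insert {x,y} M)"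
proof -
  have P: "partition_on A M" and C: "\<forall>c\<in>M. card c = 2"
    using assms(1) by (auto simp: perfect_matching_def)
  have "\<Union>M = A" using P by (auto simp: partition_on_def)
  then have d: "disjnt {x,y} (\<Union>M)" using assms by (auto simp: disjnt_def)
  have "insert x (insert y A) - {x,y} = A" using assms by auto
  then have "partition_on (insert x (insert y A)) (insert {x,y} M)"
    using partition_on_insert[OF d] P by auto
  then show ?thesis using C assms(4) by (simp add: perfect_matching_def)
qed

lemma perfect_matching_Diff:
  assumes "perfect_matching A M" "c \<in> M"
  shows "perfect_matching (A - c) (M - {c})"
proof -
  have P: "partition_on A M" and C: "\<forall>c\<in>M. card c = 2"
    using assms(1) by (auto simp: perfect_matching_def)
  have d: "disjnt c (\<Union>(M - {c}))"
    using P assms(2) by (auto simp: partition_on_def disjnt_def disjoint_def)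
  have "insert c (M - {c}) = M" using assms(2) by auto
  then have "partition_on A (insert c (M - {c}))" using P by simp
  then have "partition_on (A - c) (M - {c})" using partition_on_insert[OF d] by blast
  then show ?thesis using C by (simp add: perfect_matching_def)
qed

lemma chord_diagrams_finite: "finite (chord_diagrams n)"
  by (rule finite_subset[OF _ finitely_many_partition_on[of "{1..2*n}"]])
     (auto simp: chord_diagrams_def)

lemma chord_diagram_finite: "M \<in> chord_diagrams n \<Longrightarrow> finite M"
  by (auto simp: chord_diagrams_def intro: finite_elements)

lemma chord_diagram_chord_subset: "M \<in> chord_diagrams n \<Longrightarrow> c \<in> M \<Longrightarrow> c \<subseteq> {1..2*n}"
  by (auto simp: chord_diagrams_def partition_on_def)

lemma chord_diagram_card_chord: "M \<in> chord_diagrams n \<Longrightarrow> c \<in> M \<Longrightarrow> card c = 2"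
  by (auto simp: chord_diagrams_def)

section \<open>Removing the chord through 1\<close>

definition shift :: "nat \<Rightarrow> nat \<Rightarrow> nat" where
  "shift a i = (if Suc i < a then Suc i else i + 2)"

definition unshift :: "nat \<Rightarrow> nat \<Rightarrow> nat" where
  "unshift a j = (if j < a then j - 1 else j - 2)"

definition add_chord :: "nat set set \<Rightarrow> nat \<Rightarrow> nat set set" where
  "add_chord M a = insert {1,a} ((`) (shift a) ` M)"

lemma inj_shift: "inj (shift a)"
  by (auto simp: inj_def shift_def split: if_splits)

lemma inj_image_shift: "inj ((`) (shift a))"
  by (rule injI) (simp add: inj_image_eq_iff[OF inj_shift])

lemma unshift_shift: "unshift a (shift a i) = i"
  by (simp add: shift_def unshift_def)

lemma shift_unshift: "a \<ge> 2 \<Longrightarrow> j \<ge> 2 \<Longrightarrow> j \<noteq> a \<Longrightarrow> shift a (unshift a j) = j"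
  by (auto simp: shift_def unshift_def)

lemma shift_image:
  assumes "a \<in> {2..2*n+2}"
  shows "shift a ` {1..2*n} = {2..2*n+2} - {a}"
proof
  show "shift a ` {1..2*n} \<subseteq> {2..2*n+2} - {a}" by (auto simp: shift_def)
  show "{2..2*n+2} - {a} \<subseteq> shift a ` {1..2*n}"
  proof
    fix j assume j: "j \<in> {2..2*n+2} - {a}"
    then have "j = shift a (unshift a j)" "unshift a j \<in> {1..2*n}"
      using assms by (auto simp: shift_def unshift_def)
    then show "j \<in> shift a ` {1..2*n}" by blast
  qed
qed

lemma one_notin_shift_image:
  assumes "M \<in> chord_diagrams n" "c \<in> M"
  shows "1 \<notin> shift a ` c"
proof
  assume "1 \<in> shift a ` c"
  then have "0 \<in> c" by (auto simp: shift_def split: if_splits)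
  then show False using chord_diagram_chord_subset[OF assms] by auto
qed

lemma add_chord_in_chord_diagrams:
  assumes M: "M \<in> chord_diagrams n" and a: "a \<in> {2..2*n+2}"
  shows "add_chord M a \<in> chord_diagrams (Suc n)"
proof -
  have "perfect_matching (shift a ` {1..2*n}) ((`) (shift a) ` M)"
    using M by (intro perfect_matching_inj_image) (auto simp: chord_diagrams_eq intro: inj_on_subset[OF inj_shift])
  then have "perfect_matching ({2..2*n+2} - {a}) ((`) (shift a) ` M)"
    using shift_image[OF a] by simp
  then have "perfect_matching (insert 1 (insert a ({2..2*n+2} - {a}))) (add_chord M a)"
    unfolding add_chord_def by (rule perfect_matching_insert) (use a in simp_all)
  moreover have "insert 1 (insert a ({2..2*n+2} - {a})) = {1..2*Suc n}"
    using a by auto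
  ultimately show ?thesis by (simp add: chord_diagrams_eq)
qed

lemma inj_on_add_chord: "inj_on (case_prod add_chord) (chord_diagrams n \<times> {2..2*n+2})"
proof (rule inj_onI, clarify)
  fix M1 a1 M2 a2
  assume M1: "M1 \<in> chord_diagrams n" and a1: "a1 \<in> {2..2*n+2}"
    and M2: "M2 \<in> chord_diagrams n" and a2: "a2 \<in> {2..2*n+2}"
    and eq: "add_chord M1 a1 = add_chord M2 a2"
  have "{1,a1} \<in> add_chord M1 a1" by (simp add: add_chord_def)
  then have "{1,a1} \<in> add_chord M2 a2" using eq by simp
  moreover have "{1,a1} \<notin> (`) (shift a2) ` M2" using one_notin_shift_image[OF M2] by blast
  ultimately have "{1,a1} = {1,a2}" by (simp add: add_chord_def)
  then have a: "a1 = a2" using a1 a2 by (simp add: doubleton_eq_iff)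
  have "{1,a1} \<notin> (`) (shift a1) ` M1" "{1,a1} \<notin> (`) (shift a1) ` M2"
    using one_notin_shift_image[OF M1] one_notin_shift_image[OF M2] by blast+
  then have "(`) (shift a1) ` M1 = (`) (shift a1) ` M2"
    using eq a unfolding add_chord_def by (simp add: insert_ident)
  then show "M1 = M2 \<and> a1 = a2" using a by (simp add: inj_image_eq_iff[OF inj_image_shift])
qed

lemma chord_diagram_chord_at_1:
  assumes "M \<in> chord_diagrams (Suc n)"
  obtains a where "a \<in> {2..2*n+2}" "{1,a} \<in> M"
proof -
  have P: "partition_on {1..2*Suc n} M" and C: "\<forall>c\<in>M. card c = 2"
    using assms by (auto simp: chord_diagrams_def)
  have "1 \<in> \<Union>M" using P by (auto simp: partition_on_def)
  then obtain c where c: "c \<in> M" "1 \<in> c" by blast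
  obtain x y where "c = {x,y}" "x \<noteq> y" using C c(1) by (meson card_2_iff)
  then obtain a where ca: "c = {1,a}" "a \<noteq> 1" using c(2) by auto
  have "c \<subseteq> {1..2*Suc n}" using P c(1) by (auto simp: partition_on_def)
  then have "a \<in> {2..2*n+2}" using ca by auto
  then show thesis using that c ca by blast
qed

lemma add_chord_remove_chord:
  assumes M: "M \<in> chord_diagrams (Suc n)" and a: "a \<in> {2..2*n+2}" and c: "{1,a} \<in> M"
  defines "M' \<equiv> (`) (unshift a) ` (M - {{1,a}})"
  shows "M' \<in> chord_diagrams n" "add_chord M' a = M"
proof -
  define B where "B = {2..2*n+2} - {a}"
  have "perfect_matching ({1..2*Suc n} - {1,a}) (M - {{1,a}})"
    using perfect_matching_Diff M c by (auto simp: chord_diagrams_eq)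
  moreover have "{1..2*Suc n} - {1,a} = B" using a unfolding B_def by auto
  ultimately have m: "perfect_matching B (M - {{1,a}})" by simp
  have shift_unshift_B: "shift a (unshift a j) = j" if "j \<in> B" for j
    using that a by (intro shift_unshift) (auto simp: B_def)
  have "inj_on (unshift a) B"
    using shift_unshift_B by (metis inj_on_inverseI)
  from perfect_matching_inj_image[OF m this]
  have "perfect_matching (unshift a ` B) M'" unfolding M'_def .
  moreover have "unshift a ` B = {1..2*n}"
    unfolding B_def shift_image[OF a, symmetric] image_image unshift_shift by simp
  ultimately show "M' \<in> chord_diagrams n" by (simp add: chord_diagrams_eq)
  have "b \<subseteq> B" if "b \<in> M - {{1,a}}" for b
    using m that by (auto simp: perfect_matching_def partition_on_def)
  then have "shift a ` unshift a ` b = b" if "b \<in> M - {{1,a}}" for b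
    using that shift_unshift_B by (force simp: image_image)
  then have "(`) (shift a) ` M' = M - {{1,a}}" unfolding M'_def image_image by simp
  then show "add_chord M' a = M" unfolding add_chord_def using c by auto
qed

lemma bij_betw_add_chord:
  "bij_betw (case_prod add_chord) (chord_diagrams n \<times> {2..2*n+2}) (chord_diagrams (Suc n))"
proof -
  have "chord_diagrams (Suc n) \<subseteq> case_prod add_chord ` (chord_diagrams n \<times> {2..2*n+2})"
  proof
    fix M assume M: "M \<in> chord_diagrams (Suc n)"
    then obtain a where a: "a \<in> {2..2*n+2}" "{1,a} \<in> M" by (rule chord_diagram_chord_at_1)
    define M' where "M' = (`) (unshift a) ` (M - {{1,a}})"
    have "M' \<in> chord_diagrams n" "add_chord M' a = M"
      using add_chord_remove_chord[OF M a] unfolding M'_def by blast+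
    then show "M \<in> case_prod add_chord ` (chord_diagrams n \<times> {2..2*n+2})"
      using a by (intro rev_image_eqI[of "(M', a)"]) auto
  qed
  then show ?thesis unfolding bij_betw_def
    using inj_on_add_chord add_chord_in_chord_diagrams by fastforce
qed

section \<open>Short chords under insertion\<close>

lemma doubleton_short_iff: "(\<exists>i. {p,q} = {i, Suc i}) \<longleftrightarrow> q = Suc p \<or> p = Suc q" for p q :: nat
  by (auto simp: doubleton_eq_iff)

text \<open>The chord {a - 2, a - 1} of M is the one whose endpoints are shifted to a - 1 and a + 1.\<close>

lemma shift_image_short_iff:
  assumes "a \<ge> 2" "card c = 2"
  shows "(\<exists>i. shift a ` c = {i, Suc i}) \<longleftrightarrow> (\<exists>i. c = {i, Suc i}) \<and> c \<noteq> {a-2, a-1}"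
proof -
  obtain x y where xy: "c = {x,y}" "x \<noteq> y" using assms(2) by (meson card_2_iff)
  then have "shift a ` c = {shift a x, shift a y}" by simp
  then show ?thesis using xy assms(1)
    unfolding doubleton_short_iff by (auto simp: shift_def doubleton_eq_iff split: if_splits)
qed

lemma short_chords_add_chord:
  assumes M: "M \<in> chord_diagrams n" and a: "a \<in> {2..2*n+2}"
  shows "short_chords (add_chord M a)
    = (if a = 2 then {{1,2}} else {}) \<union> (`) (shift a) ` (short_chords M - {{a-2,a-1}})"
proof -
  have "(\<exists>i. {1,a} = {i, Suc i}) \<longleftrightarrow> a = 2"
    using a doubleton_short_iff[of 1 a] by (auto simp: eval_nat_numeral)
  then have "{c \<in> {{1,a}}. \<exists>i. c = {i, Suc i}} = (if a = 2 then {{1,2}} else {})" by auto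
  moreover have "{c \<in> M. \<exists>i. shift a ` c = {i, Suc i}} = short_chords M - {{a-2,a-1}}"
    using shift_image_short_iff[of a] chord_diagram_card_chord[OF M] a
    by (auto simp: short_chords_def)
  moreover have "short_chords (add_chord M a)
      = {c \<in> {{1,a}}. \<exists>i. c = {i, Suc i}} \<union> (`) (shift a) ` {c \<in> M. \<exists>i. shift a ` c = {i, Suc i}}"
    by (auto simp: short_chords_def add_chord_def)
  ultimately show ?thesis by simp
qed

lemma card_short_chords_add_chord:
  assumes M: "M \<in> chord_diagrams n" and a: "a \<in> {2..2*n+2}"
  shows "card (short_chords (add_chord M a))
    = (if a = 2 then 1 else 0) + (card (short_chords M) - (if {a-2,a-1} \<in> M then 1 else 0))"
proof -
  have fin: "finite (short_chords M)"
    using chord_diagram_finite[OF M] by (auto simp: short_chords_def)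
  have "{1,2} \<notin> (`) (shift a) ` M" using one_notin_shift_image[OF M] by blast
  then have disj: "(if a = 2 then {{1,2}} else {}) \<inter> (`) (shift a) ` (short_chords M - {{a-2,a-1}}) = {}"
    by (auto simp: short_chords_def)
  have "{a-2,a-1} \<in> M \<longleftrightarrow> {a-2,a-1} \<in> short_chords M"
    using a by (auto simp: short_chords_def intro!: exI[of _ "a-2"])
  then have "card ((`) (shift a) ` (short_chords M - {{a-2,a-1}}))
      = card (short_chords M) - (if {a-2,a-1} \<in> M then 1 else 0)"
    using fin by (simp add: card_image inj_on_subset[OF inj_image_shift] card_Diff_singleton_if)
  then show ?thesis
    unfolding short_chords_add_chord[OF M a] using card_Un_disjoint[OF _ _ disj] fin by simp
qed

definition splitting_positions :: "nat \<Rightarrow> nat set set \<Rightarrow> nat set" where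
  "splitting_positions n M = {a \<in> {3..2*n+2}. {a-2,a-1} \<in> M}"

lemma card_splitting_positions:
  assumes M: "M \<in> chord_diagrams n"
  shows "card (splitting_positions n M) = card (short_chords M)"
proof -
  have "inj_on (\<lambda>a. {a-2,a-1}) (splitting_positions n M)"
    by (rule inj_onI) (auto simp: splitting_positions_def doubleton_eq_iff)
  moreover have "(\<lambda>a. {a-2,a-1}) ` splitting_positions n M = short_chords M"
  proof (intro equalityI subsetI)
    fix c assume "c \<in> (\<lambda>a. {a-2,a-1}) ` splitting_positions n M"
    then obtain a where a: "a \<in> splitting_positions n M" "c = {a-2,a-1}" by blast
    then have "c = {a-2, Suc (a-2)}" by (auto simp: splitting_positions_def)
    with a show "c \<in> short_chords M" by (auto simp: splitting_positions_def short_chords_def)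
  next
    fix c assume "c \<in> short_chords M"
    then obtain i where i: "c = {i, Suc i}" "c \<in> M" by (auto simp: short_chords_def)
    then have "i \<ge> 1" "Suc i \<le> 2*n" using chord_diagram_chord_subset[OF M i(2)] by auto
    then have "i + 2 \<in> splitting_positions n M" using i by (auto simp: splitting_positions_def)
    moreover have "c = {(i+2)-2, (i+2)-1}" using i(1) by simp
    ultimately show "c \<in> (\<lambda>a. {a-2,a-1}) ` splitting_positions n M" by blast
  qed
  ultimately show ?thesis using card_image by fastforce
qed

lemma count_positions_short_chords:
  assumes M: "M \<in> chord_diagrams n"
  defines "k \<equiv> card (short_chords M)"
  shows "(\<Sum>a\<in>{2..2*n+2}. if card (short_chords (add_chord M a)) = s then 1 else 0 :: real)
    = (if Suc k = s then 1 else 0) + (if k = Suc s then real k else 0)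
      + (if k = s then 2 * real n - real k else 0)"
proof -
  let ?count = "\<lambda>a. if card (short_chords (add_chord M a)) = s then 1 else 0 :: real"
  define A where "A = splitting_positions n M"
  have cA: "card A = k" using card_splitting_positions[OF M] by (simp add: A_def k_def)
  have sub: "A \<subseteq> {3..2*n+2}" by (auto simp: A_def splitting_positions_def)
  then have "k \<le> 2*n" using card_mono[OF _ sub] cA by simp
  moreover have "card ({3..2*n+2} - A) = 2*n - k"
    using card_Diff_subset[OF finite_subset[OF sub] sub] cA by simp
  ultimately have rest: "(\<Sum>a\<in>{3..2*n+2} - A. ?count a) = (if k = s then 2 * real n - real k else 0)"
    using card_short_chords_add_chord[OF M]
    by (auto simp: A_def splitting_positions_def k_def of_nat_diff)
  have "(\<Sum>a\<in>A. ?count a) = (\<Sum>a\<in>A. if k - 1 = s then 1 else 0)"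
    using card_short_chords_add_chord[OF M] sub
    by (intro sum.cong) (auto simp: A_def splitting_positions_def k_def)
  also have "\<dots> = (if k = Suc s then real k else 0)"
    using cA by (cases k) auto
  finally have split: "(\<Sum>a\<in>A. ?count a) = (if k = Suc s then real k else 0)" .
  have "{0,1} \<notin> M" using chord_diagram_chord_subset[OF M, of "{0,1}"] by auto
  then have first: "?count 2 = (if Suc k = s then 1 else 0)"
    using card_short_chords_add_chord[OF M, of 2] by (simp add: k_def)
  have "{2..2*n+2} = insert 2 {3..2*n+2}" by auto
  then have "(\<Sum>a\<in>{2..2*n+2}. ?count a) = ?count 2 + (\<Sum>a\<in>{3..2*n+2}. ?count a)"
    by (simp only:) (rule sum.insert; simp)
  also have "(\<Sum>a\<in>{3..2*n+2}. ?count a) = (\<Sum>a\<in>{3..2*n+2} - A. ?count a) + (\<Sum>a\<in>A. ?count a)"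
    by (rule sum.subset_diff[OF sub]) simp
  finally show ?thesis unfolding first rest split by simp
qed

lemma L_eq_sum: "real (L n s) = (\<Sum>M\<in>chord_diagrams n. if card (short_chords M) = s then 1 else 0)"
proof -
  have "real (L n s) = (\<Sum>M\<in>{M \<in> chord_diagrams n. card (short_chords M) = s}. 1)"
    by (simp add: L_def)
  also have "\<dots> = (\<Sum>M\<in>chord_diagrams n. if card (short_chords M) = s then 1 else 0)"
    by (rule sum.inter_filter[OF chord_diagrams_finite])
  finally show ?thesis .
qed

lemma L_0: "L 0 s = (if s = 0 then 1 else 0)"
proof -
  have "chord_diagrams 0 = {{}}" by (auto simp: chord_diagrams_def partition_on_empty)
  moreover have "short_chords {} = {}" by (simp add: short_chords_def)
  ultimately have "{M \<in> chord_diagrams 0. card (short_chords M) = s} = (if s = 0 then {{}} else {})"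
    by auto
  then show ?thesis by (simp add: L_def)
qed

lemma L_Suc:
  "real (L (Suc n) s) = (if s = 0 then 0 else real (L n (s - 1)))
     + real (Suc s) * real (L n (Suc s)) + (2 * real n - real s) * real (L n s)"
proof -
  let ?C = "chord_diagrams n"
  let ?k = "\<lambda>M. card (short_chords M)"
  have "real (L (Suc n) s) = (\<Sum>M\<in>chord_diagrams (Suc n). if ?k M = s then 1 else 0)"
    by (rule L_eq_sum)
  also have "\<dots> = (\<Sum>p\<in>?C \<times> {2..2*n+2}. if ?k (case_prod add_chord p) = s then 1 else 0)"
    by (rule sum.reindex_bij_betw[OF bij_betw_add_chord, symmetric])
  also have "\<dots> = (\<Sum>M\<in>?C. \<Sum>a\<in>{2..2*n+2}. if ?k (add_chord M a) = s then 1 else 0)"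
    by (subst sum.cartesian_product) (simp add: case_prod_beta')
  also have "\<dots> = (\<Sum>M\<in>?C. (if Suc (?k M) = s then 1 else 0) + (if ?k M = Suc s then real (?k M) else 0)
      + (if ?k M = s then 2 * real n - real (?k M) else 0))"
    by (rule sum.cong[OF refl]) (rule count_positions_short_chords)
  also have "\<dots> = (\<Sum>M\<in>?C. if Suc (?k M) = s then 1 else 0)
      + (\<Sum>M\<in>?C. if ?k M = Suc s then real (?k M) else 0)
      + (\<Sum>M\<in>?C. if ?k M = s then 2 * real n - real (?k M) else 0)"
    by (simp add: sum.distrib)
  also have "(\<Sum>M\<in>?C. if Suc (?k M) = s then 1 else 0) = (if s = 0 then 0 else real (L n (s - 1)))"
    by (cases s) (simp_all add: L_eq_sum)
  also have "(\<Sum>M\<in>?C. if ?k M = Suc s then real (?k M) else 0) = real (Suc s) * real (L n (Suc s))"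
    unfolding L_eq_sum sum_distrib_left by (rule sum.cong) auto
  also have "(\<Sum>M\<in>?C. if ?k M = s then 2 * real n - real (?k M) else 0) = (2 * real n - real s) * real (L n s)"
    unfolding L_eq_sum sum_distrib_left by (rule sum.cong) auto
  finally show ?thesis .
qed

section \<open>The generating functions\<close>

lemma sqrt_1m2t_nth_0: "fps_nth sqrt_1m2t 0 = 1"
  by (simp add: sqrt_1m2t_def)

lemma sqrt_1m2t_squared: "sqrt_1m2t * sqrt_1m2t = 1 - 2 * fps_X"
proof -
  have X0: "fps_nth (- 2 * fps_X :: real fps) 0 = 0" by simp
  have "sqrt_1m2t * sqrt_1m2t = (fps_binomial (1/2) * fps_binomial (1/2)) oo (- 2 * fps_X)"
    unfolding sqrt_1m2t_def by (rule fps_compose_mult_distrib[OF X0, symmetric])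
  also have "fps_binomial (1/2) * fps_binomial (1/2) = (fps_binomial 1 :: real fps)"
    by (simp add: fps_binomial_add_mult[symmetric])
  also have "fps_binomial 1 oo (- 2 * fps_X) = (1 :: real fps) + (- 2 * fps_X)"
    by (simp add: fps_binomial_1 fps_compose_add_distrib X0)
  finally show ?thesis by simp
qed

lemma sqrt_1m2t_mult_inverse: "sqrt_1m2t * inverse sqrt_1m2t = 1"
  by (rule inverse_mult_eq_1') (simp add: sqrt_1m2t_nth_0)

lemma fps_deriv_sqrt_1m2t: "fps_deriv sqrt_1m2t = - inverse sqrt_1m2t"
proof -
  have "fps_deriv (sqrt_1m2t * sqrt_1m2t) = fps_deriv (1 - 2 * fps_X :: real fps)"
    by (simp only: sqrt_1m2t_squared)
  then have "2 * (sqrt_1m2t * fps_deriv sqrt_1m2t) = 2 * (-1 :: real fps)"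
    by (simp add: algebra_simps)
  then have "sqrt_1m2t * fps_deriv sqrt_1m2t = -1"
    by (metis mult_minus_right mult_cancel_left zero_neq_numeral)
  have "fps_deriv sqrt_1m2t = fps_deriv sqrt_1m2t * (sqrt_1m2t * inverse sqrt_1m2t)"
    by (simp add: sqrt_1m2t_mult_inverse)
  also have "\<dots> = (sqrt_1m2t * fps_deriv sqrt_1m2t) * inverse sqrt_1m2t"
    by (simp add: algebra_simps)
  finally show ?thesis by (simp add: \<open>sqrt_1m2t * fps_deriv sqrt_1m2t = -1\<close>)
qed

lemma fps_deriv_inverse_sqrt_1m2t:
  "fps_deriv (inverse sqrt_1m2t) = inverse sqrt_1m2t * inverse sqrt_1m2t * inverse sqrt_1m2t"
  using fps_inverse_deriv[of sqrt_1m2t] sqrt_1m2t_nth_0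
  by (simp add: fps_deriv_sqrt_1m2t power2_eq_square)

lemma fps_deriv_exp_sqrt_1m2t:
  "fps_deriv (fps_exp 1 oo (sqrt_1m2t - 1)) = - (fps_exp 1 oo (sqrt_1m2t - 1)) * inverse sqrt_1m2t"
proof -
  have "fps_nth (sqrt_1m2t - 1) 0 = 0" by (simp add: sqrt_1m2t_nth_0)
  then show ?thesis by (simp add: fps_compose_deriv fps_deriv_sqrt_1m2t)
qed

text \<open>The differential equation for short_chord_series below, after expanding the derivative, in
  terms of S = sqrt(1 - 2t), V = 1/S, E = exp(S - 1) and R = (1 - S)^k.\<close>

lemma short_chord_ode_identity_0:
  fixes S V E :: "'a::idom"
  shows "S * V = 1 \<Longrightarrow> S * S * (- E * V * V + E * (V * V * V)) = E * V * (1 - S)"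
  by algebra

lemma short_chord_ode_identity_Suc:
  fixes S V E R c :: "'a::idom"
  shows "S * V = 1 \<Longrightarrow>
    S * S * (- E * V * V * ((1 - S) * R) + E * (V * V * V) * ((1 - S) * R) + E * V * (c * V * R))
    = c * E * V * R + E * V * ((1 - S) * ((1 - S) * R)) - c * (E * V * ((1 - S) * R))"
  by algebra

definition short_chord_series :: "nat \<Rightarrow> real fps" where
  "short_chord_series s = (fps_exp 1 oo (sqrt_1m2t - 1)) * inverse sqrt_1m2t * (1 - sqrt_1m2t) ^ s"

lemma short_chord_series_nth_0: "fps_nth (short_chord_series s) 0 = (if s = 0 then 1 else 0)"
  by (simp add: short_chord_series_def sqrt_1m2t_nth_0)

lemma short_chord_series_ode:
  "(1 - 2 * fps_X) * fps_deriv (short_chord_series s)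
    = fps_const (real s) * short_chord_series (s - 1) + short_chord_series (Suc s)
      - fps_const (real s) * short_chord_series s"
proof -
  define S V E where "S = sqrt_1m2t" and "V = inverse sqrt_1m2t"
    and "E = fps_exp 1 oo (sqrt_1m2t - 1)"
  have SV: "S * V = 1" and SS: "1 - 2 * fps_X = S * S"
    using sqrt_1m2t_mult_inverse sqrt_1m2t_squared by (simp_all add: S_def V_def)
  have DE: "fps_deriv E = - E * V" and DV: "fps_deriv V = V * V * V" and DS: "fps_deriv S = - V"
    using fps_deriv_exp_sqrt_1m2t fps_deriv_inverse_sqrt_1m2t fps_deriv_sqrt_1m2t
    by (simp_all add: S_def V_def E_def)
  have series: "short_chord_series k = E * V * (1 - S) ^ k" for k
    by (simp add: short_chord_series_def S_def V_def E_def)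
  show ?thesis
  proof (cases s)
    case 0
    have "fps_deriv (E * V) = - E * V * V + E * (V * V * V)" by (simp add: DE DV algebra_simps)
    then have "(1 - 2 * fps_X) * fps_deriv (E * V) = S * S * (- E * V * V + E * (V * V * V))"
      by (simp add: SS)
    also have "\<dots> = E * V * (1 - S)" using SV by (rule short_chord_ode_identity_0)
    finally show ?thesis by (simp add: 0 series)
  next
    case (Suc k)
    define R c where "R = (1 - S) ^ k" and "c = fps_const (real (Suc k))"
    have DR: "fps_deriv ((1 - S) ^ Suc k) = c * V * R"
      by (simp only: fps_deriv_power) (simp add: c_def R_def DS)
    have "fps_deriv (short_chord_series s)
        = E * V * fps_deriv ((1 - S) ^ Suc k) + (E * fps_deriv V + fps_deriv E * V) * (1 - S) ^ Suc k"
      unfolding series Suc fps_deriv_mult by (simp add: algebra_simps)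
    also have "\<dots> = - E * V * V * ((1 - S) * R) + E * (V * V * V) * ((1 - S) * R) + E * V * (c * V * R)"
      unfolding DR DE DV by (simp add: R_def algebra_simps)
    finally have "fps_deriv (short_chord_series s)
        = - E * V * V * ((1 - S) * R) + E * (V * V * V) * ((1 - S) * R) + E * V * (c * V * R)" .
    then have "(1 - 2 * fps_X) * fps_deriv (short_chord_series s)
        = S * S * (- E * V * V * ((1 - S) * R) + E * (V * V * V) * ((1 - S) * R) + E * V * (c * V * R))"
      by (simp add: SS)
    also have "\<dots> = c * E * V * R + E * V * ((1 - S) * ((1 - S) * R)) - c * (E * V * ((1 - S) * R))"
      using SV by (rule short_chord_ode_identity_Suc)
    finally show ?thesis by (simp add: series Suc R_def c_def algebra_simps)
  qed
qed

lemma fps_nth_one_minus_2X_mult_deriv: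
  fixes F :: "'a::comm_ring_1 fps"
  shows "fps_nth ((1 - 2 * fps_X) * fps_deriv F) n
    = of_nat (Suc n) * fps_nth F (Suc n) - 2 * of_nat n * fps_nth F n"
proof -
  have "(1 - 2 * fps_X) * fps_deriv F = fps_deriv F - 2 * (fps_X * fps_deriv F)"
    by (simp add: algebra_simps)
  also have "fps_nth \<dots> n = of_nat (Suc n) * fps_nth F (Suc n) - 2 * of_nat n * fps_nth F n"
    by (cases n) (simp_all add: numeral_fps_const fps_mult_nth_1' algebra_simps)
  finally show ?thesis .
qed

lemma short_chord_series_nth_Suc:
  "real (Suc n) * fps_nth (short_chord_series s) (Suc n)
    = 2 * real n * fps_nth (short_chord_series s) n + real s * fps_nth (short_chord_series (s - 1)) n
      + fps_nth (short_chord_series (Suc s)) n - real s * fps_nth (short_chord_series s) n"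
  using arg_cong[OF short_chord_series_ode[of s], of "\<lambda>F. fps_nth F n"]
  unfolding fps_nth_one_minus_2X_mult_deriv by simp

text \<open>Multiplying by s! makes the recurrence uniform in s: L(n, s-1) enters as
  s * (L(n, s-1) * (s-1)!), which vanishes for s = 0.\<close>

lemma L_eq_nth_short_chord_series: "real (L n s) * fact s = fact n * fps_nth (short_chord_series s) n"
proof (induction n arbitrary: s)
  case 0
  show ?case by (simp add: L_0 short_chord_series_nth_0)
next
  case (Suc n)
  let ?h = "\<lambda>s. fps_nth (short_chord_series s) n"
  have "real (L (Suc n) s) * fact s = real s * (real (L n (s - 1)) * fact (s - 1))
      + real (L n (Suc s)) * fact (Suc s) + (2 * real n - real s) * (real (L n s) * fact s)"
    by (cases s) (simp_all add: L_Suc fact_Suc algebra_simps)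
  also have "\<dots> = fact n * (real s * ?h (s - 1) + ?h (Suc s) + (2 * real n - real s) * ?h s)"
    by (simp only: Suc.IH) (simp add: algebra_simps)
  also have "\<dots> = fact n * (real (Suc n) * fps_nth (short_chord_series s) (Suc n))"
    by (simp only: short_chord_series_nth_Suc) (simp add: algebra_simps)
  also have "\<dots> = fact (Suc n) * fps_nth (short_chord_series s) (Suc n)"
    by (simp add: fact_Suc)
  finally show ?case .
qed

theorem theorem2:
  fixes s :: nat
  shows "Abs_fps (\<lambda>n. real (L n s) / fact n)
    = (fps_exp 1 oo (sqrt_1m2t - 1)) / sqrt_1m2t
      * ((1 - sqrt_1m2t) ^ s / fps_const (fact s))"
proof -
  have "(fps_exp 1 oo (sqrt_1m2t - 1)) / sqrt_1m2t = (fps_exp 1 oo (sqrt_1m2t - 1)) * inverse sqrt_1m2t"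
    by (rule fps_divide_unit) (simp add: sqrt_1m2t_nth_0)
  then have "(fps_exp 1 oo (sqrt_1m2t - 1)) / sqrt_1m2t * ((1 - sqrt_1m2t) ^ s / fps_const (fact s))
      = fps_const (inverse (fact s)) * short_chord_series s"
    by (simp add: short_chord_series_def algebra_simps)
  moreover have "real (L n s) / fact n = inverse (fact s) * fps_nth (short_chord_series s) n" for n
    using L_eq_nth_short_chord_series[of n s] by (simp add: field_simps)
  ultimately show ?thesis by (simp add: fps_eq_iff)
qed

end
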